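(* Let $k\ge 3$ and let $w$ be a word over $\{a,b\}$. Let $p$ and $q$ be two consecutive occurrences of $u=ba^{k-1}$ in $w$ ($p$ before $q$), with sets of forbidden local positions $F_p$ and $F_q$. If $F_q=\{0,i,i+1,\dots,k-1\}$ for some $1\le i\le k-1$ and $|F_p|=|F_q|$, then $F_p=F_q$.
   Context: $\Sigma=\{a,b\}$. $S_k=\left(\Sigma^k\setminus\{ba^{k-1},b^{k-1}a\}\right)\cup\left(\Sigma^{k-1}\setminus\{a^{k-1},b^{k-1}\}\right)$, $u=ba^{k-1}$, $v=b^{k-1}a$. $\mathit{Pref}(S^* )$ denotes the set of prefixes of words in $S^*$. For $w=w_1\cdots w_n$, $w[i..j]=w_i\cdots w_j$ (empty if $i>j$). A position $j$, $0\le j\le n-1$, is forbidden in $w$ if $w[j+1..n]\notin\mathit{Pref}(S_k^* )$. An occurrence of $p\in\{u,v\}$ in $w$ is an index $s$ with $w[s+1..s+k]=p$; local position $i\in\{0,\dots,k-1\}$ is the position $s+i$ of $w$, and it is forbidden in the occurrence if $s+i$ is forbidden in $w$. Two occurrences of words from $\{u,v\}$ starting at $s<t$ overlap if $t<s+k$; they are consecutive if either they overlap or they are the only occurrences of $u$ or $v$ lying inside the factor $w[s+1..t+k]$. *)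

theory Defs
  imports Main
begin

text \<open>Alphabet {a,b}; words are lists, position j of the paper's 1-indexed word w_1...w_n
  is list index j-1.\<close>
datatype letter = A | B

definition u_word :: "nat \<Rightarrow> letter list" where
  "u_word k = B # replicate (k - 1) A"

definition v_word :: "nat \<Rightarrow> letter list" where
  "v_word k = replicate (k - 1) B @ [A]"

definition S_set :: "nat \<Rightarrow> letter list set" where
  "S_set k = ({x. length x = k} - {u_word k, v_word k})
           \<union> ({x. length x = k - 1} - {replicate (k - 1) A, replicate (k - 1) B})"

definition star_lang :: "letter list set \<Rightarrow> letter list set" where
  "star_lang S = {concat ws | ws. ws \<in> lists S}"

definition Pref :: "letter list set \<Rightarrow> letter list set" where
  "Pref L = {x. \<exists>y. x @ y \<in> L}"

text \<open>w[j+1..n] = drop j w\<close>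
definition forbidden :: "nat \<Rightarrow> letter list \<Rightarrow> nat \<Rightarrow> bool" where
  "forbidden k w j \<longleftrightarrow> j < length w \<and> drop j w \<notin> Pref (star_lang (S_set k))"

text \<open>occurrence of p at index s: w[s+1..s+|p|] = p\<close>
definition occurs_at :: "letter list \<Rightarrow> letter list \<Rightarrow> nat \<Rightarrow> bool" where
  "occurs_at w p s \<longleftrightarrow> s + length p \<le> length w \<and> take (length p) (drop s w) = p"

definition occ_uv :: "nat \<Rightarrow> letter list \<Rightarrow> nat \<Rightarrow> bool" where
  "occ_uv k w s \<longleftrightarrow> occurs_at w (u_word k) s \<or> occurs_at w (v_word k) s"

definition forb_local :: "nat \<Rightarrow> letter list \<Rightarrow> nat \<Rightarrow> nat set" where
  "forb_local k w s = {i. i < k \<and> forbidden k w (s + i)}"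

definition consecutive :: "nat \<Rightarrow> letter list \<Rightarrow> nat \<Rightarrow> nat \<Rightarrow> bool" where
  "consecutive k w s t \<longleftrightarrow> occ_uv k w s \<and> occ_uv k w t \<and> s < t \<and>
     (t < s + k \<or> (\<forall>r. occ_uv k w r \<and> s \<le> r \<and> r + k \<le> t + k \<longrightarrow> r = s \<or> r = t))"

end

theory Submission
  imports Defs
begin

(* For i = 1 the set F_t is the whole window {0..k-1} and equal cardinality
   suffices; so let 2 <= i <= k-1.  Write F_s, F_t for the forbidden local positions of the two consecutive
   occurrences s < t of u = b a^(k-1).  Two facts about the language drive everything:
   if position p is forbidden and the factor of w starting at p is a word of S_k, then the
   position right after that factor is forbidden as well.  Between s and t there is no
   occurrence of u or v, so every length-k factor starting strictly between them lies in S_k,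
   and forbiddenness travels in steps of k from s+x (x >= 1) into the window [t, t+k), landing
   on t + ((x + c) mod k) for the fixed shift c with t + c = s (mod k).  The landing point
   cannot be t+i: otherwise t+i-k would be forbidden, and the short factor of length k-1
   starting there (it contains the b at t) would force t+i-1, i.e. i-1, into F_t.
   Moreover 0 in F_s forces k-1 in F_s, again via a short factor.  A counting argument
   (the rotation x -> (x + c) mod k is injective) then shows c = 1 and F_s = F_t.
   The file first proves the language facts, then the propagation along the gap, then the
   combinatorial rigidity of the rotation, and finally assembles the theorem. *)

lemma Pref_star_Nil: "[] \<in> Pref (star_lang S)"
  unfolding Pref_def star_lang_def by (auto intro!: exI[of _ "[]"])

lemma Pref_star_Cons:
  assumes "x \<in> S" and "y \<in> Pref (star_lang S)"
  shows "x @ y \<in> Pref (star_lang S)"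
proof -
  obtain z ws where "y @ z = concat ws" and "ws \<in> lists S"
    using assms(2) unfolding Pref_def star_lang_def by blast
  then have "(x @ y) @ z = concat (x # ws)" and "x # ws \<in> lists S"
    using assms(1) by auto
  then show ?thesis unfolding Pref_def star_lang_def by blast
qed

lemma forbidden_shift:
  assumes factor: "take n (drop p w) \<in> S_set k" and len: "p + n \<le> length w"
    and forb: "forbidden k w p"
  shows "forbidden k w (p + n)"
proof (rule ccontr)
  assume "\<not> forbidden k w (p + n)"
  then have "drop (p + n) w \<in> Pref (star_lang (S_set k))"
    unfolding forbidden_def using Pref_star_Nil by (cases "p + n < length w") auto
  from Pref_star_Cons[OF factor this] have "drop p w \<in> Pref (star_lang (S_set k))"
    by (metis append_take_drop_id drop_drop add.commute)
  then show False using forb unfolding forbidden_def by simp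
qed

lemma long_factor_in_S_set:
  "length f = k \<Longrightarrow> f \<noteq> u_word k \<Longrightarrow> f \<noteq> v_word k \<Longrightarrow> f \<in> S_set k"
  unfolding S_set_def by auto

lemma mixed_short_factor_in_S_set:
  assumes "length f = k - 1" and "A \<in> set f" and "B \<in> set f"
  shows "f \<in> S_set k"
proof -
  have "f \<noteq> replicate (k - 1) A" and "f \<noteq> replicate (k - 1) B"
    using assms by (auto simp: in_set_replicate)
  then show ?thesis using assms(1) unfolding S_set_def by blast
qed

lemma nth_factor: "j < n \<Longrightarrow> p + n \<le> length w \<Longrightarrow> take n (drop p w) ! j = w ! (p + j)"
  by simp

lemma letter_in_factor:
  assumes "j < n" and "p + n \<le> length w"
  shows "w ! (p + j) \<in> set (take n (drop p w))"
proof -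
  have "j < length (take n (drop p w))" using assms by simp
  from nth_mem[OF this] show ?thesis using assms by simp
qed

lemma occurs_at_u_word:
  assumes "occurs_at w (u_word k) p" and "k \<ge> 1"
  shows "p + k \<le> length w" and "w ! p = B" and "\<And>j. 1 \<le> j \<Longrightarrow> j < k \<Longrightarrow> w ! (p + j) = A"
proof -
  have fac: "take k (drop p w) = u_word k" and len: "p + k \<le> length w"
    using assms unfolding occurs_at_def u_word_def by auto
  then have letter: "w ! (p + j) = u_word k ! j" if "j < k" for j
    using that by (metis nth_factor)
  show "p + k \<le> length w" by (fact len)
  show "w ! p = B" using letter[of 0] assms(2) unfolding u_word_def by simp
  show "w ! (p + j) = A" if "1 \<le> j" "j < k" for j
    using that letter[of j] unfolding u_word_def by (cases j) auto
qed

text \<open>Two distinct occurrences of \<open>u\<close> cannot overlap (the second b would fall on an a).\<close>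
lemma u_occurrences_apart:
  assumes s: "occurs_at w (u_word k) s" and t: "occurs_at w (u_word k) t"
    and "s < t" and k: "k \<ge> 1"
  shows "s + k \<le> t"
proof (rule ccontr)
  assume "\<not> s + k \<le> t"
  then have "w ! (s + (t - s)) = A"
    using \<open>s < t\<close> by (intro occurs_at_u_word(3)[OF s k]) auto
  then show False using occurs_at_u_word(2)[OF t k] \<open>s < t\<close> by simp
qed

lemma consecutive_u_gap:
  assumes s: "occurs_at w (u_word k) s" and t: "occurs_at w (u_word k) t"
    and cons: "consecutive k w s t" and k: "k \<ge> 1"
  shows "s + k \<le> t" and "\<And>r. s < r \<Longrightarrow> r < t \<Longrightarrow> \<not> occ_uv k w r"
proof -
  show apart: "s + k \<le> t"
    using u_occurrences_apart[OF s t _ k] cons unfolding consecutive_def by simp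
  show "\<not> occ_uv k w r" if "s < r" "r < t" for r
    using cons apart that unfolding consecutive_def by fastforce
qed

section \<open>Propagation of forbidden positions\<close>

lemma forbidden_step:
  assumes no_occ: "\<not> occ_uv k w q" and len: "q + k \<le> length w" and k: "k \<ge> 1"
    and forb: "forbidden k w q"
  shows "forbidden k w (q + k)"
proof -
  have lens: "length (u_word k) = k" "length (v_word k) = k"
    using k unfolding u_word_def v_word_def by auto
  then have "take k (drop q w) \<noteq> u_word k" and "take k (drop q w) \<noteq> v_word k"
    using no_occ len unfolding occ_uv_def occurs_at_def by auto
  then have "take k (drop q w) \<in> S_set k"
    using len by (intro long_factor_in_S_set) auto
  from forbidden_shift[OF this len forb] show ?thesis .
qed

text \<open>A forbidden position whose length-\<open>(k-1)\<close> factor contains a b and is followed by an a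
  forces the position \<open>k-1\<close> further on, unless \<open>v\<close> occurs there (the factor could be all b's).\<close>
lemma forbidden_skip_short:
  assumes len: "p + k \<le> length w" and no_v: "\<not> occurs_at w (v_word k) p"
    and j: "j < k - 1" "w ! (p + j) = B" and last: "w ! (p + (k - 1)) = A"
    and forb: "forbidden k w p"
  shows "forbidden k w (p + (k - 1))"
proof -
  define f where "f = take (k - 1) (drop p w)"
  have flen: "length f = k - 1" and plen: "p + (k - 1) \<le> length w"
    using len unfolding f_def by auto
  have "B \<in> set f" using letter_in_factor[OF j(1) plen] j(2) unfolding f_def by simp
  moreover have "A \<in> set f"
  proof (rule ccontr)
    assume "A \<notin> set f"
    then have "\<forall>y\<in>set f. y = B" by (metis letter.exhaust)
    then have f_B: "f = replicate (k - 1) B" using flen by (simp add: replicate_eqI)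
    have "take (Suc (k - 1)) (drop p w) = f @ [drop p w ! (k - 1)]"
      unfolding f_def using len j(1) by (intro take_Suc_conv_app_nth) simp
    then have "take k (drop p w) = v_word k"
      using j(1) len last f_B unfolding v_word_def by simp
    then have "occurs_at w (v_word k) p"
      using len j(1) unfolding occurs_at_def v_word_def by simp
    with no_v show False ..
  qed
  ultimately have "f \<in> S_set k" using flen by (intro mixed_short_factor_in_S_set)
  from forbidden_shift[OF this[unfolded f_def] plen forb] show ?thesis .
qed

lemma forbidden_propagates:
  assumes step: "\<And>q. s < q \<Longrightarrow> q < t \<Longrightarrow> forbidden k w q \<Longrightarrow> forbidden k w (q + k)"
    and p: "s < p" "forbidden k w p"
    and q: "p \<le> q" "q < t + k" "q mod k = p mod k"
  shows "forbidden k w q"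
proof -
  obtain n where qn: "q = p + k * n" using mod_eq_nat2E[OF q(3)[symmetric] q(1)] by blast
  have "p + k * m < t + k \<Longrightarrow> forbidden k w (p + k * m)" for m
  proof (induction m)
    case 0
    then show ?case using p(2) by simp
  next
    case (Suc m)
    then have "forbidden k w (p + k * m)" and "p + k * m < t" by simp_all
    then have "forbidden k w (p + k * m + k)" using step p(1) by simp
    then show ?case by (simp add: ac_simps)
  qed
  then show ?thesis using q(2) qn by simp
qed

lemma congruent_less:
  assumes "(a::nat) mod k = b mod k" and "a < b"
  shows "a + k \<le> b"
proof -
  obtain n where "b = a + k * n" using mod_eq_nat2E[OF assms(1)] assms(2) by auto
  then show ?thesis using assms(2) by (cases n) auto
qed

lemma shift_exists:
  assumes "(k::nat) > 0"
  shows "\<exists>c<k. (t + c) mod k = s mod k"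
proof (intro exI conjI)
  have "t mod k < k" using assms by simp
  moreover have "k * (t div k) + t mod k = t" by (rule mult_div_mod_eq)
  ultimately have "t + (s + k - t mod k) = s + k + k * (t div k)" by linarith
  then show "(t + (s + k - t mod k) mod k) mod k = s mod k"
    by (metis mod_add_right_eq mod_add_self2 mod_mult_self2 mult.commute)
  show "(s + k - t mod k) mod k < k" using assms by simp
qed

lemma forbidden_reaches_window:
  assumes step: "\<And>q. s < q \<Longrightarrow> q < t \<Longrightarrow> forbidden k w q \<Longrightarrow> forbidden k w (q + k)"
    and apart: "s + k \<le> t" and c: "(t + c) mod k = s mod k"
    and x: "1 \<le> x" "x < k" and forb: "forbidden k w (s + x)"
  shows "forbidden k w (t + (x + c) mod k)" and "forbidden k w (t + (x + c) mod k - k)"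
proof -
  define y where "y = (x + c) mod k"
  have y: "y < k" unfolding y_def using x by simp
  have cong: "(t + y) mod k = (s + x) mod k"
    unfolding y_def by (metis c mod_add_left_eq mod_add_right_eq add.assoc add.commute)
  have sx: "s < s + x" "s + x < t + y" using x apart by auto
  show "forbidden k w (t + y)"
    using forbidden_propagates[OF step sx(1) forb] sx y cong by simp
  have "s + x + k \<le> t + y" using congruent_less[OF cong[symmetric] sx(2)] .
  moreover have "(t + y - k) mod k = (s + x) mod k"
    using cong calculation by (metis le_mod_geq le_add2 le_trans)
  ultimately show "forbidden k w (t + y - k)"
    using forbidden_propagates[OF step sx(1) forb] y by simp
qed

lemma forbidden_u_start:
  assumes occ: "occurs_at w (u_word k) s" and k: "k \<ge> 3" and forb: "forbidden k w s"
  shows "forbidden k w (s + (k - 1))"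
proof -
  have len: "s + (k - 1) \<le> length w" using occurs_at_u_word(1)[OF occ] k by simp
  have "B \<in> set (take (k - 1) (drop s w))"
    using letter_in_factor[OF _ len, of 0] occurs_at_u_word(2)[OF occ] k by simp
  moreover have "A \<in> set (take (k - 1) (drop s w))"
    using letter_in_factor[OF _ len, of 1] occurs_at_u_word(3)[OF occ, of 1] k by simp
  ultimately have "take (k - 1) (drop s w) \<in> S_set k"
    using len by (intro mixed_short_factor_in_S_set) auto
  from forbidden_shift[OF this len forb] show ?thesis .
qed

lemma gap_position_allowed:
  assumes t: "occurs_at w (u_word k) t" and tk: "k \<le> t" and i: "2 \<le> i" "i < k"
    and no_v: "\<not> occurs_at w (v_word k) (t + i - k)"
    and allowed: "\<not> forbidden k w (t + (i - 1))"
  shows "\<not> forbidden k w (t + i - k)"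
proof
  assume "forbidden k w (t + i - k)"
  moreover have "t + i - k + k \<le> length w" using occurs_at_u_word(1)[OF t] i tk by simp
  moreover have "w ! (t + i - k + (k - i)) = B" using occurs_at_u_word(2)[OF t] i tk by simp
  moreover have "w ! (t + i - k + (k - 1)) = A"
    using occurs_at_u_word(3)[OF t, of "i - 1"] i tk by (simp add: add.commute)
  ultimately have "forbidden k w (t + i - k + (k - 1))"
    using forbidden_skip_short[OF _ no_v, of "k - i"] i by simp
  then show False using allowed i tk by (simp add: add.commute)
qed

section \<open>Rigidity of the window under a rotation\<close>

lemma rotation_inj: "inj_on (\<lambda>x. (x + c) mod k) {..<(k::nat)}"
proof (rule inj_onI)
  have "x = y" if eq: "(x + c) mod k = (y + c) mod k" and le: "x \<le> y" and y: "y < k" for x y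
  proof -
    obtain n where "y + c = x + c + k * n" using mod_eq_nat2E[OF eq] le by auto
    then show ?thesis using le y by (cases n) auto
  qed
  then show "x = y" if "x \<in> {..<k}" "y \<in> {..<k}" "(x + c) mod k = (y + c) mod k" for x y
    using that by (metis le_cases lessThan_iff)
qed

lemma injection_onto_one_smaller:
  assumes finG: "finite G" and inj: "inj_on f (F - {a})" and img: "f ` (F - {a}) \<subseteq> G"
    and card: "card F = card G + 1"
  shows "a \<in> F" and "f ` (F - {a}) = G"
proof -
  have le: "card (F - {a}) \<le> card G" using card_inj_on_le[OF inj img finG] .
  then show a: "a \<in> F" using card by (cases "a \<in> F") auto
  have "finite F" using card by (metis card.infinite add_is_0 zero_neq_one)
  then have "card (f ` (F - {a})) = card G"
    using card card_image[OF inj] a by simp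
  then show "f ` (F - {a}) = G" using card_subset_eq[OF finG img] by simp
qed

text \<open>Counting gives
  \<open>0 \<in> F\<close> and surjectivity onto \<open>T - {i}\<close>, so \<open>c\<close> (the image of 0) lies outside \<open>T - {i}\<close>;
  the image \<open>c - 1\<close> of \<open>k-1\<close> lies inside, which pins down \<open>c = 1\<close>.\<close>
lemma rotation_window_rigid:
  fixes F :: "nat set" and c i k :: nat
  assumes i: "2 \<le> i" "i < k" and c: "c < k" and F: "F \<subseteq> {..<k}"
    and maps: "\<And>x. x \<in> F \<Longrightarrow> 1 \<le> x \<Longrightarrow> (x + c) mod k \<in> ({0} \<union> {i..k - 1}) - {i}"
    and wrap: "0 \<in> F \<Longrightarrow> k - 1 \<in> F"
    and card: "card F = card ({0} \<union> {i..k - 1})"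
  shows "F = {0} \<union> {i..k - 1}"
proof -
  define T where "T = {0} \<union> {i..k - 1}"
  define G where "G = T - {i}"
  define rot where "rot x = (x + c) mod k" for x
  have finT: "finite T" unfolding T_def by simp
  have cardG: "card F = card G + 1"
    using i finT card unfolding G_def T_def by (simp add: card_Diff_singleton)
  have inj: "inj_on rot {..<k}" unfolding rot_def by (rule rotation_inj)
  have img: "rot ` (F - {0}) \<subseteq> G"
  proof
    fix y assume "y \<in> rot ` (F - {0})"
    then obtain x where "x \<in> F" "x \<noteq> 0" "y = rot x" by blast
    then show "y \<in> G" using maps[of x] unfolding rot_def G_def T_def by simp
  qed
  have injF: "inj_on rot (F - {0})" using inj_on_subset[OF inj] F by blast
  have finG: "finite G" using finT unfolding G_def by simp
  note counting = injection_onto_one_smaller[OF finG injF img cardG]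
  have c_notin: "c \<notin> G"
  proof
    assume "c \<in> G"
    then obtain x where x: "x \<in> F - {0}" "c = rot x"
      using counting(2) by blast
    moreover have "rot 0 = c" using c unfolding rot_def by simp
    ultimately have "x = 0" using inj_onD[OF inj, of x 0] F c by auto
    then show False using x by simp
  qed
  have "k - 1 \<in> F - {0}" using wrap counting(1) i by simp
  then have wrap_in: "rot (k - 1) \<in> G" using img by blast
  have "0 \<in> G" using i unfolding G_def T_def by simp
  then have c_pos: "c \<ge> 1" using c_notin by (cases c) auto
  then have "rot (k - 1) = c - 1" using c unfolding rot_def by (simp add: mod_if)
  moreover have "c \<le> i" using c_notin c unfolding G_def T_def by auto
  ultimately have c1: "c = 1" using wrap_in c_pos unfolding G_def T_def by auto
  have "F \<subseteq> T"
  proof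
    fix x assume x: "x \<in> F"
    have "x = 0 \<or> x = k - 1 \<or> (x + 1 < k \<and> rot x \<in> G)"
      using img x F by auto
    then show "x \<in> T" using c1 i unfolding rot_def G_def T_def by auto
  qed
  then show ?thesis using card_subset_eq[OF finT] card unfolding T_def by metis
qed

theorem lemma5:
  fixes k :: nat and w :: "letter list" and s t i :: nat
  assumes "k \<ge> 3"
    and "occurs_at w (u_word k) s" and "occurs_at w (u_word k) t"
    and "consecutive k w s t"
    and "1 \<le> i" and "i \<le> k - 1"
    and "forb_local k w t = {0} \<union> {i..k - 1}"
    and "card (forb_local k w s) = card (forb_local k w t)"
  shows "forb_local k w s = forb_local k w t"
proof -
  have k: "k \<ge> 1" using assms(1) by simp
  note gap = consecutive_u_gap[OF assms(2-4) k]
  have tlen: "t + k \<le> length w" using occurs_at_u_word(1)[OF assms(3) k] .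
  have step: "forbidden k w (q + k)" if "s < q" "q < t" "forbidden k w q" for q
    using forbidden_step[OF gap(2) _ k] that tlen by simp
  have Fs: "forb_local k w s \<subseteq> {..<k}" unfolding forb_local_def by auto
  show ?thesis
  proof (cases "i = 1")
    case True
    have "{0} \<union> {1..k - 1} = {..<k}" using k by (auto simp: atLeastAtMost_iff)
    then have "forb_local k w t = {..<k}" using assms(7) True by simp
    then show ?thesis using card_subset_eq[OF finite_lessThan Fs] assms(8) by simp
  next
    case False
    then have i: "2 \<le> i" "i < k" using assms(5,6) k by auto
    obtain c where c: "c < k" "(t + c) mod k = s mod k" using shift_exists[of k t s] k by auto
    have "s < t + i - k" and "t + i - k < t" using gap(1) i by auto
    then have no_v: "\<not> occurs_at w (v_word k) (t + i - k)"
      using gap(2) unfolding occ_uv_def by blast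
    have "i - 1 \<notin> forb_local k w t" using assms(7) i by simp
    then have "\<not> forbidden k w (t + (i - 1))" using i unfolding forb_local_def by simp
    from gap_position_allowed[OF assms(3) _ i no_v this]
    have gap_ok: "\<not> forbidden k w (t + i - k)" using gap(1) by simp
    have maps: "(x + c) mod k \<in> forb_local k w t - {i}"
      if "x \<in> forb_local k w s" "1 \<le> x" for x
    proof -
      have x: "x < k" "forbidden k w (s + x)" using that(1) unfolding forb_local_def by auto
      note land = forbidden_reaches_window[OF step gap(1) c(2) that(2) x]
      have "(x + c) mod k < k" using x(1) by simp
      moreover have "(x + c) mod k \<noteq> i" using land(2) gap_ok by auto
      ultimately show ?thesis using land(1) unfolding forb_local_def by simp
    qed
    have wrap: "k - 1 \<in> forb_local k w s" if "0 \<in> forb_local k w s"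
      using forbidden_u_start[OF assms(2,1)] that k unfolding forb_local_def by simp
    from rotation_window_rigid[OF i c(1) Fs maps[unfolded assms(7)] wrap assms(8)[unfolded assms(7)]]
    show ?thesis unfolding assms(7) .
  qed
qed

end
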